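(* Let $\lambda$ be a nonzero real number and $n$ a positive integer. Then $$\beta_{n-1,-\lambda}(2\lambda+1)=\sum_{k=1}^{n}(k-1)!\,(-1)^{n-k}H_{k,-\lambda}\,S_{2,\lambda}(n,k).$$
   Context: For a nonzero real parameter $\mu$ (used here with $\mu=\lambda$ and $\mu=-\lambda$), real $y$ and integer $k\ge0$: $(y)_{0,\mu}=1$, $(y)_{k,\mu}=y(y-\mu)\cdots(y-(k-1)\mu)$; $(y)_0=1$, $(y)_k=y(y-1)\cdots(y-k+1)$. The degenerate exponential is $e_\mu^x(t)=\sum_{k\ge0}(x)_{k,\mu}t^k/k!=(1+\mu t)^{x/\mu}$, $e_\mu(t)=e^1_\mu(t)$. The degenerate Bernoulli polynomials are defined by $\frac{t}{e_\mu(t)-1}e_\mu^x(t)=\sum_{n\ge0}\beta_{n,\mu}(x)\frac{t^n}{n!}$. The degenerate Stirling numbers of the second kind $S_{2,\mu}(n,k)$ are defined by $(x)_{n,\mu}=\sum_{k=0}^{n}S_{2,\mu}(n,k)(x)_{k}$ ($n\ge0$). The degenerate harmonic numbers are $H_{0,\mu}=0$ and $H_{n,\mu}=\sum_{k=1}^{n}\frac{1}{\mu}\binom{\mu}{k}(-1)^{k-1}$ for $n\ge1$. *)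

theory Defs
  imports Complex_Main "HOL-Computational_Algebra.Formal_Power_Series"
begin

definition dff :: "real \<Rightarrow> real \<Rightarrow> nat \<Rightarrow> real" where
  "dff mu y k = (\<Prod>i<k. y - real i * mu)"

definition ff :: "real \<Rightarrow> nat \<Rightarrow> real" where
  "ff y k = (\<Prod>i<k. y - real i)"

definition dexp :: "real \<Rightarrow> real \<Rightarrow> real fps" where
  "dexp mu x = Abs_fps (\<lambda>k. dff mu x k / fact k)"

definition dbern :: "nat \<Rightarrow> real \<Rightarrow> real \<Rightarrow> real" where
  "dbern n mu x = fact n * fps_nth (fps_X / (dexp mu 1 - 1) * dexp mu x) n"

definition dstirling2 :: "real \<Rightarrow> nat \<Rightarrow> nat \<Rightarrow> real" where
  "dstirling2 mu n k = (THE c. (\<forall>j>n. c j = 0) \<and>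
      (\<forall>x::real. dff mu x n = (\<Sum>j=0..n. c j * ff x j))) k"

definition dharm :: "real \<Rightarrow> nat \<Rightarrow> real" where
  "dharm mu n = (\<Sum>k=1..n. (1/mu) * (mu gchoose k) * (-1)^(k-1))"

end

theory Submission
  imports Defs
begin

(* Write mu = -lambda and substitute u = 1 - e_mu^(-1)(t) into S(t) = sum_k H_(k,mu) t^k / k.
   Since sum_k H_(k,mu) t^k = (1 - (1 - t)^mu) / (mu (1 - t)) and
   (1 - u)^mu = e_mu^(-mu)(t) = 1 / (1 + mu t), one finds
   (S o u)' = t e_mu^(1 - 2 mu)(t) / (e_mu(t) - 1), the generating function of beta_(n,mu)(1 - 2 mu).
   On the other hand u(t) = 1 - e_lambda(-t), and the degenerate Stirling numbers have the generating
   function (e_lambda(t) - 1)^k / k! = sum_n S_(2,lambda)(n,k) t^n / n!, because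
   (1 + s)^x composed with s = e_lambda(t) - 1 is e_lambda^x(t).
   Comparing the coefficients of t^n in S o u gives the formula. *)

unbundle fps_syntax

lemma dff_Suc: "dff mu x (Suc n) = dff mu x n * (x - real n * mu)"
  by (simp add: dff_def)

lemma dexp_nth: "dexp mu x $ n = dff mu x n / fact n"
  by (simp add: dexp_def)

lemma dexp_nth_0 [simp]: "dexp mu x $ 0 = 1"
  by (simp add: dexp_nth dff_def)

lemma one_plus_const_X_mult_nth:
  fixes F :: "real fps"
  shows "((1 + fps_const c * fps_X) * F) $ n = F $ n + (if n = 0 then 0 else c * F $ (n - 1))"
proof -
  have "(1 + fps_const c * fps_X) * F = F + fps_const c * (fps_X * F)"
    by (simp add: algebra_simps)
  then show ?thesis
    by (simp del: fps_mult_fps_X_commute)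
qed

lemma degenerate_ode_iff_nth:
  "(1 + fps_const mu * fps_X) * fps_deriv F = fps_const x * F \<longleftrightarrow>
     (\<forall>n. real (Suc n) * F $ Suc n = (x - real n * mu) * F $ n)"
proof -
  have "((1 + fps_const mu * fps_X) * fps_deriv F) $ n = (fps_const x * F) $ n \<longleftrightarrow>
      real (Suc n) * F $ Suc n = (x - real n * mu) * F $ n" for n
    by (cases n) (auto simp: one_plus_const_X_mult_nth algebra_simps)
  then show ?thesis
    by (simp add: fps_eq_iff)
qed

lemma dexp_ode: "(1 + fps_const mu * fps_X) * fps_deriv (dexp mu x) = fps_const x * dexp mu x"
  unfolding degenerate_ode_iff_nth
  by (simp add: dexp_nth dff_Suc fact_Suc field_simps del: of_nat_Suc)

lemma dexp_unique:
  assumes ode: "(1 + fps_const mu * fps_X) * fps_deriv F = fps_const x * F" and "F $ 0 = 1"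
  shows "F = dexp mu x"
proof (rule fps_ext)
  have rec_F: "real (Suc n) * F $ Suc n = (x - real n * mu) * F $ n" for n
    using ode unfolding degenerate_ode_iff_nth by blast
  have rec_dexp: "real (Suc n) * dexp mu x $ Suc n = (x - real n * mu) * dexp mu x $ n" for n
    using dexp_ode unfolding degenerate_ode_iff_nth by blast
  show "F $ n = dexp mu x $ n" for n
  proof (induction n)
    case (Suc n)
    with rec_F[of n] rec_dexp[of n] show ?case
      by (metis mult_left_cancel of_nat_eq_0_iff nat.distinct(1))
  qed (simp add: \<open>F $ 0 = 1\<close>)
qed

lemma dexp_add: "dexp mu (x + y) = dexp mu x * dexp mu y"
proof (rule dexp_unique[symmetric])
  let ?P = "1 + fps_const mu * fps_X"
  have "?P * fps_deriv (dexp mu x * dexp mu y) =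
      dexp mu x * (?P * fps_deriv (dexp mu y)) + (?P * fps_deriv (dexp mu x)) * dexp mu y"
    by (simp add: algebra_simps)
  also have "\<dots> = fps_const (x + y) * (dexp mu x * dexp mu y)"
    unfolding dexp_ode by (simp add: algebra_simps flip: fps_const_add)
  finally show "?P * fps_deriv (dexp mu x * dexp mu y) =
      fps_const (x + y) * (dexp mu x * dexp mu y)" .
qed simp

lemma dexp_0: "dexp mu 0 = 1"
  by (rule dexp_unique[symmetric]) simp_all

lemma dexp_self: "dexp mu mu = 1 + fps_const mu * fps_X"
proof (rule fps_ext)
  fix n
  show "dexp mu mu $ n = (1 + fps_const mu * fps_X) $ n"
  proof (cases "n \<le> 1")
    case False
    then have "dff mu mu n = 0"
      unfolding dff_def by (intro prod_zero bexI[of _ 1]) auto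
    with False show ?thesis
      by (simp add: dexp_nth)
  qed (auto simp: le_Suc_eq dexp_nth dff_def)
qed

lemma dexp_neg_self_mult: "dexp mu (- mu) * (1 + fps_const mu * fps_X) = 1"
  by (simp flip: dexp_self dexp_add add: dexp_0)

lemma fps_binomial_compose_dexp: "fps_binomial a oo (dexp mu c - 1) = dexp mu (a * c)"
proof (rule dexp_unique)
  let ?w = "dexp mu c - 1"
  let ?B = "fps_binomial a"
  let ?P = "1 + fps_const mu * fps_X"
  have w0: "?w $ 0 = 0"
    by simp
  have "fps_deriv ?B * (1 + fps_X) = fps_const a * ?B"
    unfolding fps_binomial_deriv by (rule fps_times_divide_eq) (auto simp: fps_eq_iff)
  then have "((1 + fps_X) * fps_deriv ?B) oo ?w = (fps_const a * ?B) oo ?w"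
    by (simp add: mult.commute)
  then have binomial_ode: "dexp mu c * (fps_deriv ?B oo ?w) = fps_const a * (?B oo ?w)"
    by (simp add: fps_compose_mult_distrib[OF w0] fps_compose_add_distrib w0)
  have "?P * fps_deriv (?B oo ?w) = (fps_deriv ?B oo ?w) * (?P * fps_deriv (dexp mu c))"
    by (simp add: fps_compose_deriv[OF w0] algebra_simps)
  also have "\<dots> = fps_const c * (dexp mu c * (fps_deriv ?B oo ?w))"
    unfolding dexp_ode by (simp add: algebra_simps)
  also have "\<dots> = fps_const (a * c) * (?B oo ?w)"
    by (simp add: binomial_ode algebra_simps flip: fps_const_mult)
  finally show "?P * fps_deriv (?B oo ?w) = fps_const (a * c) * (?B oo ?w)" .
qed simp

lemma dbern_eq_nth:
  assumes "F * (dexp mu 1 - 1) = fps_X * dexp mu x"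
  shows "dbern n mu x = fact n * F $ n"
proof -
  let ?D = "dexp mu 1 - 1"
  have "?D $ 1 \<noteq> 0"
    by (simp add: dexp_nth dff_def)
  then have "?D \<noteq> 0" and "subdegree ?D \<le> subdegree (fps_X :: real fps)"
    by (auto intro: subdegree_leI)
  then have "fps_X / ?D * dexp mu x * ?D = F * ?D"
    using fps_times_divide_eq[of ?D fps_X] assms by (simp add: mult_ac)
  then have "fps_X / ?D * dexp mu x = F"
    using \<open>?D \<noteq> 0\<close> by simp
  then show ?thesis
    by (simp add: dbern_def)
qed

lemma dff_neg: "dff (- mu) (- x) n = (- 1) ^ n * dff mu x n"
  by (induction n) (simp_all add: dff_Suc dff_def algebra_simps)

lemma dexp_neg: "dexp (- mu) (- x) = dexp mu x oo (fps_const (- 1) * fps_X)"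
  by (rule fps_ext) (simp add: dexp_nth dff_neg)

lemma ff_eq_fact_gchoose: "ff x j = fact j * (x gchoose j)"
  by (simp add: ff_def gbinomial_mult_fact lessThan_atLeast0)

lemma dff_eq_sum_ff:
  "dff mu x n = (\<Sum>j=0..n. fact n / fact j * ((dexp mu 1 - 1) ^ j $ n) * ff x j)"
proof -
  have "(\<Sum>j=0..n. (x gchoose j) * ((dexp mu 1 - 1) ^ j $ n)) = dff mu x n / fact n"
    using arg_cong[OF fps_binomial_compose_dexp[of x mu 1], of "\<lambda>F. F $ n"]
    by (simp add: fps_compose_nth dexp_nth)
  then show ?thesis
    by (simp add: ff_eq_fact_gchoose sum_distrib_left field_simps)
qed

lemma ff_of_nat_eq_0: "j < i \<Longrightarrow> ff (real j) i = 0"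
  unfolding ff_def by (rule prod_zero) auto

lemma ff_of_nat_self_neq_0: "ff (real j) j \<noteq> 0"
  unfolding ff_def by (simp add: prod_zero_iff)

lemma ff_coeffs_unique:
  assumes "\<forall>j>n. c j = 0" "\<forall>j>n. d j = 0"
    and "\<forall>x. (\<Sum>j=0..n. c j * ff x j) = (\<Sum>j=0..n. d j * ff x j)"
  shows "c = d"
proof
  fix j
  show "c j = d j"
  proof (induction j rule: less_induct)
    case (less j)
    show ?case
    proof (cases "j \<le> n")
      case True
      \<comment> \<open>evaluate at \<open>x = j\<close>: lower terms agree by induction, higher ones vanish\<close>
      have "(\<Sum>i=0..n. c i * ff (real j) i) - (\<Sum>i=0..n. d i * ff (real j) i) =
          (\<Sum>i\<in>{0..n}. if i = j then (c j - d j) * ff (real j) j else 0)"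
        unfolding sum_subtractf[symmetric] left_diff_distrib[symmetric]
        by (intro sum.cong refl) (auto simp: less.IH ff_of_nat_eq_0 nat_neq_iff)
      also have "\<dots> = (c j - d j) * ff (real j) j"
        using True by simp
      finally show ?thesis
        using assms(3) ff_of_nat_self_neq_0[of j] by simp
    qed (use assms(1,2) in simp)
  qed
qed

lemma dstirling2_eq_power_nth: "dstirling2 mu n k = fact n / fact k * ((dexp mu 1 - 1) ^ k $ n)"
proof -
  define s where "s j = fact n / fact j * ((dexp mu 1 - 1) ^ j $ n)" for j
  have "\<forall>j>n. s j = 0"
    by (simp add: s_def startsby_zero_power_prefix)
  moreover have "\<forall>x. dff mu x n = (\<Sum>j=0..n. s j * ff x j)"
    unfolding s_def using dff_eq_sum_ff by blast
  ultimately have "(THE c. (\<forall>j>n. c j = 0) \<and> (\<forall>x. dff mu x n = (\<Sum>j=0..n. c j * ff x j))) = s"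
    by (intro the_equality) (auto intro: ff_coeffs_unique)
  then show ?thesis
    unfolding dstirling2_def s_def by simp
qed

lemma fps_neg_power_nth: "(- f) ^ k $ n = (- 1) ^ k * (f ^ k $ n)"
  for f :: "'a::comm_ring_1 fps"
  by (cases "even k") simp_all

lemma one_minus_dexp_neg_power_nth:
  "(1 - dexp (- mu) (- 1)) ^ k $ n = (- 1) ^ (n + k) * ((dexp mu 1 - 1) ^ k $ n)"
proof -
  have "1 - dexp (- mu) (- 1) = (1 - dexp mu 1) oo (fps_const (- 1) * fps_X)"
    using dexp_neg[of mu 1] by (simp add: fps_compose_sub_distrib)
  then have "(1 - dexp (- mu) (- 1)) ^ k = (1 - dexp mu 1) ^ k oo (fps_const (- 1) * fps_X)"
    by (simp add: fps_compose_power)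
  then show ?thesis
    using fps_neg_power_nth[of "dexp mu 1 - 1" k n] by (simp add: power_add)
qed

definition dharm_fps :: "real \<Rightarrow> real fps" where
  "dharm_fps mu = Abs_fps (dharm mu)"

lemma dharm_0 [simp]: "dharm mu 0 = 0"
  by (simp add: dharm_def)

lemma dharm_Suc: "dharm mu (Suc n) = dharm mu n + (mu gchoose Suc n) * (- 1) ^ n / mu"
  by (simp add: dharm_def)

lemma dharm_fps_closed_form:
  assumes "mu \<noteq> 0"
  shows "fps_const mu * (1 - fps_X) * dharm_fps mu = 1 - (fps_binomial mu oo - fps_X)"
proof (rule fps_ext)
  fix n
  have "fps_const mu * (1 - fps_X) * dharm_fps mu =
      fps_const mu * dharm_fps mu - fps_const mu * (fps_X * dharm_fps mu)"
    by (simp add: algebra_simps)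
  then show "(fps_const mu * (1 - fps_X) * dharm_fps mu) $ n =
      (1 - (fps_binomial mu oo - fps_X)) $ n"
    using assms
    by (cases n) (simp_all add: dharm_fps_def dharm_Suc fps_compose_uminus' algebra_simps
        del: fps_mult_fps_X_commute)
qed

lemma dharm_fps_compose_one_minus_dexp:
  assumes "mu \<noteq> 0"
  shows "fps_const mu * dexp mu (- 1) * (dharm_fps mu oo (1 - dexp mu (- 1))) = 1 - dexp mu (- mu)"
proof -
  define E where "E = dexp mu (- 1)"
  define u where "u = 1 - E"
  have u0: "u $ 0 = 0"
    by (simp add: u_def E_def)
  have "- fps_X oo u = E - 1"
    by (simp add: fps_compose_uminus u0) (simp add: u_def)
  have "(fps_binomial mu oo - fps_X) oo u = fps_binomial mu oo (- fps_X oo u)"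
    by (rule fps_compose_assoc[symmetric]) (simp_all add: u0)
  also have "\<dots> = fps_binomial mu oo (E - 1)"
    unfolding \<open>- fps_X oo u = E - 1\<close> ..
  also have "\<dots> = dexp mu (- mu)"
    by (simp add: E_def fps_binomial_compose_dexp)
  finally have "(fps_binomial mu oo - fps_X) oo u = dexp mu (- mu)" .
  moreover have "(fps_const mu * (1 - fps_X) * dharm_fps mu) oo u =
      fps_const mu * E * (dharm_fps mu oo u)"
    by (simp add: fps_compose_mult_distrib[OF u0] fps_compose_sub_distrib u0) (simp add: u_def)
  ultimately show ?thesis
    unfolding dharm_fps_closed_form[OF assms] E_def u_def by (simp add: fps_compose_sub_distrib)
qed

lemma dharm_series_compose_deriv:
  assumes "mu \<noteq> 0"
  shows "fps_deriv (Abs_fps (\<lambda>k. dharm mu k / real k) oo (1 - dexp mu (- 1))) * (dexp mu 1 - 1) =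
    fps_X * dexp mu (1 - 2 * mu)"
proof -
  let ?P = "1 + fps_const mu * fps_X"
  define E where "E = dexp mu (- 1)"
  define u where "u = 1 - E"
  define S where "S = Abs_fps (\<lambda>k. dharm mu k / real k)"
  define F where "F = fps_deriv (S oo u)"
  have u0: "u $ 0 = 0"
    by (simp add: u_def E_def)
  have X_deriv_S: "fps_X * fps_deriv S = dharm_fps mu"
    by (rule fps_ext) (simp add: S_def dharm_fps_def del: of_nat_Suc)
  have "dharm_fps mu oo u = u * (fps_deriv S oo u)"
    by (simp add: fps_compose_mult_distrib[OF u0] u0 flip: X_deriv_S)
  then have harm_u: "fps_const mu * E * (u * (fps_deriv S oo u)) = 1 - dexp mu (- mu)"
    using dharm_fps_compose_one_minus_dexp[OF assms] by (simp add: E_def u_def)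
  have E_ode: "?P * fps_deriv E = - E"
    using dexp_ode[of mu "- 1"] by (metis E_def fps_const_neg fps_const_1_eq_1 mult_minus1)
  have "?P * F = - (fps_deriv S oo u) * (?P * fps_deriv E)"
    by (simp add: F_def fps_compose_deriv[OF u0]) (simp add: u_def algebra_simps)
  then have "?P * F = (fps_deriv S oo u) * E"
    by (simp add: E_ode)
  then have "fps_const mu * u * ?P * (?P * F) = (fps_const mu * E * (u * (fps_deriv S oo u))) * ?P"
    by (simp only: mult_ac)
  also have "\<dots> = fps_const mu * fps_X"
    unfolding harm_u by (simp add: left_diff_distrib dexp_neg_self_mult)
  finally have X_eq: "u * ?P * ?P * F = fps_X"
    using assms by (simp add: mult.assoc)
  have "dexp mu 1 * E = 1"
    by (simp add: E_def dexp_0 flip: dexp_add)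
  then have "F * (dexp mu 1 - 1) = F * dexp mu 1 * u"
    by (simp add: u_def right_diff_distrib mult.assoc)
  also have "\<dots> = F * dexp mu 1 * u * (dexp mu (- mu) * ?P) * (dexp mu (- mu) * ?P)"
    by (simp add: dexp_neg_self_mult)
  also have "\<dots> = (u * ?P * ?P * F) * (dexp mu 1 * dexp mu (- mu) * dexp mu (- mu))"
    by (simp only: mult_ac)
  also have "\<dots> = fps_X * dexp mu (1 - 2 * mu)"
    unfolding X_eq by (simp flip: dexp_add)
  finally show ?thesis
    unfolding F_def S_def u_def E_def .
qed

lemma dharm_series_compose_nth:
  "fact n * (Abs_fps (\<lambda>k. dharm (- mu) k / real k) oo (1 - dexp (- mu) (- 1))) $ n =
    (\<Sum>k=1..n. fact (k - 1) * (- 1) ^ (n - k) * dharm (- mu) k * dstirling2 mu n k)"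
proof -
  have "fact n * (Abs_fps (\<lambda>k. dharm (- mu) k / real k) oo (1 - dexp (- mu) (- 1))) $ n =
      (\<Sum>k=0..n. fact n * (dharm (- mu) k / real k) *
        ((- 1) ^ (n + k) * ((dexp mu 1 - 1) ^ k $ n)))"
    by (simp add: fps_compose_nth one_minus_dexp_neg_power_nth sum_distrib_left mult.assoc)
  also have "\<dots> = (\<Sum>k=1..n. fact n * (dharm (- mu) k / real k) *
        ((- 1) ^ (n + k) * ((dexp mu 1 - 1) ^ k $ n)))"
    by (simp add: sum.atLeast_Suc_atMost)
  also have "\<dots> = (\<Sum>k=1..n. fact (k - 1) * (- 1) ^ (n - k) * dharm (- mu) k * dstirling2 mu n k)"
  proof (rule sum.cong)
    fix k
    assume "k \<in> {1..n}"
    then have "(- 1) ^ (n + k) = (- 1 :: real) ^ (n - k)" and "fact k = real k * fact (k - 1)"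
      by (simp_all add: neg_one_power_add_eq_neg_one_power_diff fact_reduce)
    then show "fact n * (dharm (- mu) k / real k) * ((- 1) ^ (n + k) * ((dexp mu 1 - 1) ^ k $ n)) =
        fact (k - 1) * (- 1) ^ (n - k) * dharm (- mu) k * dstirling2 mu n k"
      by (simp add: dstirling2_eq_power_nth field_simps)
  qed simp
  finally show ?thesis .
qed

theorem theorem9:
  fixes lambda :: real and n :: nat
  assumes "lambda \<noteq> 0" and "n \<ge> 1"
  shows "dbern (n - 1) (- lambda) (2 * lambda + 1) =
    (\<Sum>k=1..n. fact (k - 1) * (-1) ^ (n - k) * dharm (- lambda) k * dstirling2 lambda n k)"
proof -
  let ?S = "Abs_fps (\<lambda>k. dharm (- lambda) k / real k) oo (1 - dexp (- lambda) (- 1))"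
  obtain m where n: "n = Suc m"
    using assms(2) by (cases n) auto
  have "fps_deriv ?S * (dexp (- lambda) 1 - 1) = fps_X * dexp (- lambda) (2 * lambda + 1)"
    using dharm_series_compose_deriv[of "- lambda"] assms(1) by (simp add: add.commute)
  then have "dbern (n - 1) (- lambda) (2 * lambda + 1) = fact (n - 1) * fps_deriv ?S $ (n - 1)"
    by (rule dbern_eq_nth)
  also have "\<dots> = fact n * ?S $ n"
    by (simp add: n fact_Suc)
  also have "\<dots> =
      (\<Sum>k=1..n. fact (k - 1) * (-1) ^ (n - k) * dharm (- lambda) k * dstirling2 lambda n k)"
    by (rule dharm_series_compose_nth)
  finally show ?thesis .
qed

end
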